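(* Let $\rho$ be a density operator, let $Z_1,\dots,Z_n$ be pairwise commuting Hermitian operators, and consider the family $\varrho_\theta=\exp(i\sum_{j=1}^n\theta_jZ_j)\,\rho\,\exp(-i\sum_{j=1}^n\theta_jZ_j)$, $\theta\in\mathbb{R}^n$, with QFI matrix $F$. Let $S$ be an arbitrary real orthogonal $n\times n$ matrix, let $Z'_j=\sum_{k=1}^nS_{jk}Z_k$, and let $F'$ be the QFI matrix of $\varrho'_\theta=\exp(i\sum_j\theta_jZ'_j)\,\rho\,\exp(-i\sum_j\theta_jZ'_j)$. Then for any real-valued, continuous, strictly monotonic function $f$ on an interval containing the spectrum of $F$, the unweighted $f$-mean QFIs coincide: $\mathcal{M}_f(F')=\mathcal{M}_f(F)$.
   Context: The QFI matrix is the SLD-based one: $[F]_{jk}=\operatorname{Re}\operatorname{tr}(L_jL_k\varrho_\theta)$ with Hermitian $L_j$ satisfying $\partial_j\varrho_\theta=(L_j\varrho_\theta+\varrho_\theta L_j)/2$. The unweighted $f$-mean of a Hermitian matrix $X$ is $\mathcal{M}_f(X):=f^{-1}\big(\tfrac1n\operatorname{tr}f(X)\big)$, with $f(X)$ defined by spectral calculus. *)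

theory Defs
  imports "HOL-Analysis.Analysis"
begin

text \<open>Operators on a finite-dimensional Hilbert space: complex matrices indexed by a
finite type 'd. Parameters theta range over real^'n (n = CARD('n)).\<close>

definition cscale :: "complex \<Rightarrow> complex^'d^'d \<Rightarrow> complex^'d^'d" where
  "cscale c A = (\<chi> i j. c * A$i$j)"

definition adjoint_mat :: "complex^'d^'d \<Rightarrow> complex^'d^'d" where
  "adjoint_mat A = (\<chi> i j. cnj (A$j$i))"

definition hermitian :: "complex^'d^'d \<Rightarrow> bool" where
  "hermitian A \<longleftrightarrow> adjoint_mat A = A"

definition density_operator :: "complex^'d^'d \<Rightarrow> bool" where
  "density_operator \<rho> \<longleftrightarrow> hermitian \<rho>
     \<and> (\<forall>v::complex^'d. 0 \<le> Re (\<Sum>i\<in>UNIV. cnj (v$i) * (\<rho> *v v)$i))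
     \<and> trace \<rho> = 1"

definition mat_pow :: "'a::semiring_1^'d^'d \<Rightarrow> nat \<Rightarrow> 'a^'d^'d" where
  "mat_pow A k = ((\<lambda>B. A ** B) ^^ k) (mat 1)"

definition mexp :: "complex^'d^'d \<Rightarrow> complex^'d^'d" where
  "mexp A = (\<Sum>k. (1 / fact k :: real) *\<^sub>R mat_pow A k)"

definition unitary_family ::
  "('n::finite \<Rightarrow> complex^'d^'d) \<Rightarrow> complex^'d^'d \<Rightarrow> real^'n \<Rightarrow> complex^'d^'d" where
  "unitary_family Z \<rho> \<theta> =
     (let H = (\<Sum>j\<in>UNIV. \<theta>$j *\<^sub>R Z j)
      in mexp (cscale \<i> H) ** \<rho> ** mexp (cscale (-\<i>) H))"

definition is_SLD ::
  "(real^'n::finite \<Rightarrow> complex^'d^'d) \<Rightarrow> real^'n \<Rightarrow> ('n \<Rightarrow> complex^'d^'d) \<Rightarrow> bool" where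
  "is_SLD \<rho> \<theta> L \<longleftrightarrow> (\<forall>j. hermitian (L j) \<and>
     ((\<lambda>t. \<rho> (\<theta> + t *\<^sub>R axis j 1)) has_vector_derivative
        ((1/2) *\<^sub>R (L j ** \<rho> \<theta> + \<rho> \<theta> ** L j))) (at 0))"

definition qfi_matrix ::
  "(real^'n::finite \<Rightarrow> complex^'d^'d) \<Rightarrow> real^'n \<Rightarrow> real^'n^'n" where
  "qfi_matrix \<rho> \<theta> = (let L = (SOME L. is_SLD \<rho> \<theta> L)
     in (\<chi> j k. Re (trace (L j ** L k ** \<rho> \<theta>))))"

definition diag_mat :: "real^'n \<Rightarrow> real^'n^'n" where
  "diag_mat v = (\<chi> i j. if i = j then v$i else 0)"

definition real_spectrum :: "real^'n^'n \<Rightarrow> real set" where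
  "real_spectrum X = {c.  \<exists>v. v \<noteq> 0 \<and> X *v v = c *\<^sub>R v}"

definition mat_fun :: "(real \<Rightarrow> real) \<Rightarrow> real^'n^'n \<Rightarrow> real^'n^'n" where
  "mat_fun f X = (SOME Y. \<exists>Q lam. orthogonal_matrix Q \<and>
       X = Q ** diag_mat lam ** transpose Q \<and>
       Y = Q ** diag_mat (\<chi> i. f (lam$i)) ** transpose Q)"

definition f_mean :: "real set \<Rightarrow> (real \<Rightarrow> real) \<Rightarrow> real^'n^'n \<Rightarrow> real" where
  "f_mean I f X = the_inv_into I f (trace (mat_fun f X) / real CARD('n))"

end

(* Since the Z_j commute with U_theta = exp(i sum_j theta_j Z_j), the partial derivatives of
   rho_theta = U_theta rho U_theta* are i[Z_j, rho_theta], and the SLDs of rho_theta are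
   U_theta L_j U_theta* for any Hermitian solutions L_j of (L_j rho + rho L_j)/2 = i[Z_j, rho].
   Hence F_jk = Re tr(L_j L_k rho), independently of theta and of the choice of the L_j: two
   solutions differ by some X with X rho + rho X = 0, which forces X rho = rho X = 0 as rho is
   positive semidefinite. Replacing Z by Z' = S Z replaces L by S L, so F' = S F S^T.
   Finally f(S F S^T) = S f(F) S^T in the spectral calculus of the symmetric matrix F, so
   tr f(F') = tr f(F) and the f-means agree. *)

theory Submission
  imports Defs
begin

type_synonym 'd cmat = "complex^'d^'d"

section \<open>The matrix exponential\<close>

definition row_norm :: "'d::finite cmat \<Rightarrow> real" where
  "row_norm A = Max (range (\<lambda>i. \<Sum>j\<in>UNIV. cmod (A$i$j)))"

lemma row_sum_le_row_norm: "(\<Sum>j\<in>UNIV. cmod (A$i$j)) \<le> row_norm A"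
  unfolding row_norm_def by (rule Max_ge) auto

lemma row_norm_le: "(\<And>i. (\<Sum>j\<in>UNIV. cmod (A$i$j)) \<le> c) \<Longrightarrow> row_norm A \<le> c"
  unfolding row_norm_def by (subst Max_le_iff) auto

lemma row_norm_attained: "\<exists>i. row_norm A = (\<Sum>j\<in>UNIV. cmod (A$i$j))"
proof -
  have "row_norm A \<in> range (\<lambda>i. \<Sum>j\<in>UNIV. cmod (A$i$j))"
    unfolding row_norm_def by (rule Max_in) auto
  then show ?thesis by auto
qed

lemma entry_le_row_norm: "cmod (A$i$j) \<le> row_norm A"
  by (rule order_trans[OF _ row_sum_le_row_norm[of A i]]) (rule member_le_sum, auto)

lemma row_norm_nonneg: "0 \<le> row_norm A"
  by (rule order_trans[OF _ entry_le_row_norm]) auto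

lemma row_norm_eq_0_iff: "row_norm A = 0 \<longleftrightarrow> A = 0"
proof
  assume "row_norm A = 0"
  then have "cmod (A$i$j) = 0" for i j
    using entry_le_row_norm[of A i j] by (metis norm_ge_zero order_antisym)
  then show "A = 0" by (simp add: vec_eq_iff)
next
  assume "A = 0"
  then show "row_norm A = 0"
    using row_norm_nonneg[of A] row_norm_le[of A 0] by auto
qed

lemma row_norm_triangle: "row_norm (A + B) \<le> row_norm A + row_norm B"
proof (rule row_norm_le)
  fix i
  have "(\<Sum>j\<in>UNIV. cmod ((A + B)$i$j)) \<le> (\<Sum>j\<in>UNIV. cmod (A$i$j) + cmod (B$i$j))"
    by (rule sum_mono) (simp add: norm_triangle_ineq)
  also have "\<dots> \<le> row_norm A + row_norm B"
    by (simp add: sum.distrib add_mono row_sum_le_row_norm)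
  finally show "(\<Sum>j\<in>UNIV. cmod ((A + B)$i$j)) \<le> row_norm A + row_norm B" .
qed

lemma row_norm_scaleR: "row_norm (r *\<^sub>R A) = \<bar>r\<bar> * row_norm A"
proof (rule antisym)
  show "row_norm (r *\<^sub>R A) \<le> \<bar>r\<bar> * row_norm A"
    by (rule row_norm_le) (simp add: sum_distrib_left[symmetric] mult_left_mono row_sum_le_row_norm)
  obtain i where i: "row_norm A = (\<Sum>j\<in>UNIV. cmod (A$i$j))"
    using row_norm_attained by blast
  have "\<bar>r\<bar> * row_norm A = (\<Sum>j\<in>UNIV. cmod ((r *\<^sub>R A)$i$j))"
    by (simp add: i sum_distrib_left)
  also have "\<dots> \<le> row_norm (r *\<^sub>R A)" by (rule row_sum_le_row_norm)
  finally show "\<bar>r\<bar> * row_norm A \<le> row_norm (r *\<^sub>R A)" .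
qed

lemma row_norm_mult: "row_norm (A ** B) \<le> row_norm A * row_norm B"
proof (rule row_norm_le)
  fix i
  have "(\<Sum>j\<in>UNIV. cmod ((A ** B)$i$j)) \<le> (\<Sum>j\<in>UNIV. \<Sum>k\<in>UNIV. cmod (A$i$k) * cmod (B$k$j))"
    unfolding matrix_matrix_mult_def
    by (rule sum_mono) (auto intro!: order_trans[OF norm_sum] sum_mono simp: norm_mult)
  also have "\<dots> = (\<Sum>k\<in>UNIV. cmod (A$i$k) * (\<Sum>j\<in>UNIV. cmod (B$k$j)))"
    by (subst sum.swap) (simp add: sum_distrib_left)
  also have "\<dots> \<le> (\<Sum>k\<in>UNIV. cmod (A$i$k) * row_norm B)"
    by (rule sum_mono) (simp add: mult_left_mono row_sum_le_row_norm)
  also have "\<dots> \<le> row_norm A * row_norm B"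
    by (simp add: sum_distrib_right[symmetric] mult_right_mono row_sum_le_row_norm row_norm_nonneg)
  finally show "(\<Sum>j\<in>UNIV. cmod ((A ** B)$i$j)) \<le> row_norm A * row_norm B" .
qed

lemma row_norm_mat_1: "row_norm (mat 1 :: 'd::finite cmat) = 1"
proof -
  have "(\<Sum>j\<in>UNIV. cmod ((mat 1 :: 'd cmat)$i$j)) = 1" for i
    by (simp add: mat_def if_distrib sum.delta cong: if_cong)
  then show ?thesis using row_norm_attained[of "mat 1 :: 'd cmat"] by metis
qed

lemma norm_vec_le_sum_norm: "norm (x::'a::real_normed_vector^'n) \<le> (\<Sum>i\<in>UNIV. norm (x$i))"
  by (simp add: norm_vec_def L2_set_le_sum)

lemma norm_le_row_norm: "norm (A :: 'd::finite cmat) \<le> real CARD('d) * row_norm A"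
proof -
  have "norm A \<le> (\<Sum>i\<in>UNIV. \<Sum>j\<in>UNIV. norm (A$i$j))"
    by (rule order_trans[OF norm_vec_le_sum_norm sum_mono[OF norm_vec_le_sum_norm]])
  also have "\<dots> \<le> (\<Sum>i\<in>(UNIV::'d set). row_norm A)"
    by (rule sum_mono) (rule row_sum_le_row_norm)
  finally show ?thesis by simp
qed

lemma matrix_add_rdistrib: "(B + C) ** A = B ** A + C ** A"
  by (vector matrix_matrix_mult_def sum.distrib[symmetric] field_simps)

(* A type copy of the square matrices with matrix multiplication and the row-sum norm, which
   form a Banach algebra; through it mexp becomes the library exp. *)
typedef ('d::finite) cmat_alg = "UNIV :: 'd cmat set"
  morphisms mat_of alg_of by auto

declare alg_of_inverse[simplified, simp] alg_of_inject[simplified, simp]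
  mat_of_inverse[simp] mat_of_inject[simp]

instantiation cmat_alg :: (finite) real_normed_algebra_1
begin
definition "0 = alg_of 0"
definition "1 = alg_of (mat 1)"
definition "x + y = alg_of (mat_of x + mat_of y)"
definition "x - y = alg_of (mat_of x - mat_of y)"
definition "- x = alg_of (- mat_of x)"
definition "x * y = alg_of (mat_of x ** mat_of y)"
definition "r *\<^sub>R x = alg_of (r *\<^sub>R mat_of x)"
definition "norm x = row_norm (mat_of x)"
definition dist_cmat_alg :: "'a cmat_alg \<Rightarrow> 'a cmat_alg \<Rightarrow> real" where
  "dist_cmat_alg x y = norm (x - y)"
definition sgn_cmat_alg :: "'a cmat_alg \<Rightarrow> 'a cmat_alg" where
  "sgn_cmat_alg x = inverse (norm x) *\<^sub>R x"
definition uniformity_cmat_alg :: "('a cmat_alg \<times> 'a cmat_alg) filter" where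
  "uniformity_cmat_alg = (INF e\<in>{0 <..}. principal {(x, y). dist x y < e})"
definition open_cmat_alg :: "'a cmat_alg set \<Rightarrow> bool" where
  "open_cmat_alg S = (\<forall>x\<in>S. \<forall>\<^sub>F (x', y) in uniformity. x' = x \<longrightarrow> y \<in> S)"
instance
proof
  fix a b :: real and x y z :: "'a cmat_alg"
  show "x + y + z = x + (y + z)" by (simp add: plus_cmat_alg_def add.assoc)
  show "x + y = y + x" by (simp add: plus_cmat_alg_def add.commute)
  show "0 + x = x" by (simp add: plus_cmat_alg_def zero_cmat_alg_def)
  show "- x + x = 0" by (simp add: plus_cmat_alg_def zero_cmat_alg_def uminus_cmat_alg_def)
  show "x - y = x + - y" by (simp add: plus_cmat_alg_def minus_cmat_alg_def uminus_cmat_alg_def)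
  show "a *\<^sub>R (x + y) = a *\<^sub>R x + a *\<^sub>R y"
    by (simp add: plus_cmat_alg_def scaleR_cmat_alg_def scaleR_right_distrib)
  show "(a + b) *\<^sub>R x = a *\<^sub>R x + b *\<^sub>R x"
    by (simp add: plus_cmat_alg_def scaleR_cmat_alg_def scaleR_left_distrib)
  show "a *\<^sub>R b *\<^sub>R x = (a * b) *\<^sub>R x" by (simp add: scaleR_cmat_alg_def)
  show "1 *\<^sub>R x = x" by (simp add: scaleR_cmat_alg_def)
  show "x * y * z = x * (y * z)" by (simp add: times_cmat_alg_def matrix_mul_assoc)
  show "(x + y) * z = x * z + y * z"
    by (simp add: times_cmat_alg_def plus_cmat_alg_def matrix_add_rdistrib)
  show "x * (y + z) = x * y + x * z"
    by (simp add: times_cmat_alg_def plus_cmat_alg_def matrix_add_ldistrib)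
  show "a *\<^sub>R x * y = a *\<^sub>R (x * y)"
    by (simp add: times_cmat_alg_def scaleR_cmat_alg_def scalar_matrix_assoc)
  show "x * a *\<^sub>R y = a *\<^sub>R (x * y)"
    by (simp add: times_cmat_alg_def scaleR_cmat_alg_def matrix_scalar_ac scalar_matrix_assoc)
  show "1 * x = x" by (simp add: times_cmat_alg_def one_cmat_alg_def)
  show "x * 1 = x" by (simp add: times_cmat_alg_def one_cmat_alg_def)
  show "(0::'a cmat_alg) \<noteq> 1"
    by (simp add: zero_cmat_alg_def one_cmat_alg_def vec_eq_iff mat_def)
  show "dist x y = norm (x - y)" by (simp add: dist_cmat_alg_def)
  show "sgn x = inverse (norm x) *\<^sub>R x" by (simp add: sgn_cmat_alg_def)
  show "(uniformity :: ('a cmat_alg \<times> 'a cmat_alg) filter) =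
      (INF e\<in>{0 <..}. principal {(x, y). dist x y < e})"
    by (simp add: uniformity_cmat_alg_def)
  show "open U = (\<forall>x\<in>U. \<forall>\<^sub>F (x', y) in uniformity. x' = x \<longrightarrow> y \<in> U)" for U :: "'a cmat_alg set"
    by (simp add: open_cmat_alg_def)
  show "(norm x = 0) = (x = 0)"
    by (simp add: norm_cmat_alg_def zero_cmat_alg_def row_norm_eq_0_iff flip: mat_of_inject)
  show "norm (x + y) \<le> norm x + norm y"
    by (simp add: norm_cmat_alg_def plus_cmat_alg_def row_norm_triangle)
  show "norm (a *\<^sub>R x) = \<bar>a\<bar> * norm x"
    by (simp add: norm_cmat_alg_def scaleR_cmat_alg_def row_norm_scaleR)
  show "norm (x * y) \<le> norm x * norm y"
    by (simp add: norm_cmat_alg_def times_cmat_alg_def row_norm_mult)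
  show "norm (1::'a cmat_alg) = 1"
    by (simp add: norm_cmat_alg_def one_cmat_alg_def row_norm_mat_1)
qed
end

lemma mat_of_one [simp]: "mat_of 1 = mat 1" by (simp add: one_cmat_alg_def)
lemma mat_of_add [simp]: "mat_of (x + y) = mat_of x + mat_of y" by (simp add: plus_cmat_alg_def)
lemma mat_of_mult [simp]: "mat_of (x * y) = mat_of x ** mat_of y" by (simp add: times_cmat_alg_def)
lemma mat_of_scaleR [simp]: "mat_of (r *\<^sub>R x) = r *\<^sub>R mat_of x" by (simp add: scaleR_cmat_alg_def)

lemma alg_of_add: "alg_of (A + B) = alg_of A + alg_of B" by (simp add: plus_cmat_alg_def)
lemma alg_of_mult: "alg_of (A ** B) = alg_of A * alg_of B" by (simp add: times_cmat_alg_def)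
lemma alg_of_scaleR: "alg_of (r *\<^sub>R A) = r *\<^sub>R alg_of A" by (simp add: scaleR_cmat_alg_def)

lemma mat_of_power: "mat_of (x ^ n) = mat_pow (mat_of x) n"
  by (induction n) (simp_all add: mat_pow_def)

lemma bounded_linear_mat_of: "bounded_linear (mat_of :: 'd::finite cmat_alg \<Rightarrow> _)"
proof (rule bounded_linear_intro[where K="real CARD('d)"])
  show "norm (mat_of x) \<le> norm x * real CARD('d)" for x :: "'d cmat_alg"
    using norm_le_row_norm[of "mat_of x"] by (simp add: norm_cmat_alg_def mult.commute)
qed simp_all

lemma bounded_linear_alg_of: "bounded_linear (alg_of :: _ \<Rightarrow> 'd::finite cmat_alg)"
  by (simp add: linear_conv_bounded_linear[symmetric] linearI alg_of_add alg_of_scaleR)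

instance cmat_alg :: (finite) banach
proof
  fix X :: "nat \<Rightarrow> 'a cmat_alg"
  assume "Cauchy X"
  then have "Cauchy (\<lambda>n. mat_of (X n))"
    by (rule bounded_linear.Cauchy[OF bounded_linear_mat_of])
  then obtain L where "(\<lambda>n. mat_of (X n)) \<longlonglongrightarrow> L"
    using Cauchy_convergent_iff convergent_def by blast
  then have "(\<lambda>n. alg_of (mat_of (X n))) \<longlonglongrightarrow> (alg_of L :: 'a cmat_alg)"
    by (rule bounded_linear.tendsto[OF bounded_linear_alg_of])
  then show "convergent X" by (auto simp: convergent_def)
qed

lemma mat_pow_series_sums_exp: "(\<lambda>n. (1 / fact n :: real) *\<^sub>R mat_pow A n) sums mat_of (exp (alg_of A))"
  using bounded_linear.sums[OF bounded_linear_mat_of exp_converges[of "alg_of A"]]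
  by (simp add: mat_of_power divide_inverse_commute)

lemma mexp_eq_exp: "mexp A = mat_of (exp (alg_of A))"
  unfolding mexp_def by (rule sums_unique[OF mat_pow_series_sums_exp, symmetric])

lemma mexp_add: "A ** B = B ** A \<Longrightarrow> mexp (A + B) = mexp A ** mexp B"
  by (simp add: mexp_eq_exp alg_of_add exp_add_commuting flip: alg_of_mult)

lemma mexp_zero: "mexp 0 = mat 1"
  by (simp add: mexp_eq_exp flip: zero_cmat_alg_def)

lemma commute_exp:
  fixes x y :: "'a::{real_normed_algebra_1,banach}"
  assumes "y * x = x * y"
  shows "y * exp x = exp x * y"
proof -
  have "y * exp x = (\<Sum>n. y * (x^n /\<^sub>R fact n))"
    unfolding exp_def by (rule suminf_mult[symmetric, OF summable_exp_generic])
  also have "\<dots> = (\<Sum>n. (x^n /\<^sub>R fact n) * y)"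
    using power_commuting_commutes[OF assms[symmetric]] by simp
  also have "\<dots> = exp x * y"
    unfolding exp_def by (rule suminf_mult2[symmetric, OF summable_exp_generic])
  finally show ?thesis .
qed

lemma mexp_commute:
  assumes "A ** B = B ** A"
  shows "B ** mexp A = mexp A ** B"
proof -
  have "alg_of B * alg_of A = alg_of A * alg_of B"
    using assms by (simp flip: alg_of_mult)
  then have "mat_of (alg_of B * exp (alg_of A)) = mat_of (exp (alg_of A) * alg_of B)"
    by (simp only: commute_exp)
  then show ?thesis by (simp add: mexp_eq_exp)
qed

lemma adjoint_mat_involution [simp]: "adjoint_mat (adjoint_mat A) = A"
  by (simp add: adjoint_mat_def vec_eq_iff)
lemma adjoint_mat_add [simp]: "adjoint_mat (A + B) = adjoint_mat A + adjoint_mat B"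
  by (simp add: adjoint_mat_def vec_eq_iff)
lemma adjoint_mat_diff [simp]: "adjoint_mat (A - B) = adjoint_mat A - adjoint_mat B"
  by (simp add: adjoint_mat_def vec_eq_iff)
lemma adjoint_mat_zero [simp]: "adjoint_mat 0 = 0"
  by (simp add: adjoint_mat_def vec_eq_iff)
lemma adjoint_mat_scaleR [simp]: "adjoint_mat (r *\<^sub>R A) = r *\<^sub>R adjoint_mat A"
  by (simp add: adjoint_mat_def vec_eq_iff)
lemma adjoint_mat_1 [simp]: "adjoint_mat (mat 1) = mat 1"
  by (simp add: adjoint_mat_def vec_eq_iff mat_def)
lemma adjoint_mat_cscale [simp]: "adjoint_mat (cscale c A) = cscale (cnj c) (adjoint_mat A)"
  by (simp add: adjoint_mat_def cscale_def vec_eq_iff)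
lemma adjoint_mat_mult: "adjoint_mat (A ** B) = adjoint_mat B ** adjoint_mat A"
  by (simp add: adjoint_mat_def vec_eq_iff matrix_matrix_mult_def mult.commute)
lemma adjoint_mat_sum: "adjoint_mat (\<Sum>k\<in>K. f k) = (\<Sum>k\<in>K. adjoint_mat (f k))"
  by (induction K rule: infinite_finite_induct) auto

lemma hermitian_adjoint_eq: "hermitian A \<Longrightarrow> adjoint_mat A = A"
  by (simp add: hermitian_def)

lemma cscale_mult_left [simp]: "cscale c A ** B = cscale c (A ** B)"
  by (simp add: cscale_def vec_eq_iff matrix_matrix_mult_def sum_distrib_left mult.assoc)
lemma cscale_mult_right [simp]: "A ** cscale c B = cscale c (A ** B)"
  by (simp add: cscale_def vec_eq_iff matrix_matrix_mult_def sum_distrib_left mult.left_commute)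
lemma cscale_cscale [simp]: "cscale c (cscale d A) = cscale (c * d) A"
  by (simp add: cscale_def vec_eq_iff)
lemma cscale_zero [simp]: "cscale c 0 = 0"
  by (simp add: cscale_def vec_eq_iff)
lemma cscale_add: "cscale c (A + B) = cscale c A + cscale c B"
  by (simp add: cscale_def vec_eq_iff algebra_simps)
lemma cscale_diff: "cscale c (A - B) = cscale c A - cscale c B"
  by (simp add: cscale_def vec_eq_iff algebra_simps)
lemma cscale_uminus_left: "cscale (- c) A = - cscale c A"
  by (simp add: cscale_def vec_eq_iff)
lemma cscale_scaleR: "cscale c (r *\<^sub>R A) = r *\<^sub>R cscale c A"
  by (simp add: cscale_def vec_eq_iff scaleR_conv_of_real)
lemma scaleR_eq_cscale: "r *\<^sub>R A = cscale (complex_of_real r) A"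
  by (simp add: cscale_def vec_eq_iff) (simp add: scaleR_conv_of_real)
lemma cscale_sum: "cscale c (\<Sum>k\<in>K. f k) = (\<Sum>k\<in>K. cscale c (f k))"
  by (induction K rule: infinite_finite_induct) (auto simp: cscale_add)

lemma matrix_mult_sum_left: "(\<Sum>k\<in>K. f k) ** B = (\<Sum>k\<in>K. f k ** B)"
  by (induction K rule: infinite_finite_induct) (auto simp: matrix_add_rdistrib)
lemma matrix_mult_sum_right: "B ** (\<Sum>k\<in>K. f k) = (\<Sum>k\<in>K. B ** f k)"
  by (induction K rule: infinite_finite_induct) (auto simp: matrix_add_ldistrib)
lemma matrix_diff_rdistrib: "(A - B) ** (C::'a::ring_1^'n^'n) = A ** C - B ** C"
  by (vector matrix_matrix_mult_def sum_subtractf[symmetric] field_simps)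
lemma matrix_diff_ldistrib: "(C::'a::ring_1^'n^'n) ** (A - B) = C ** A - C ** B"
  by (vector matrix_matrix_mult_def sum_subtractf[symmetric] field_simps)
lemma matrix_mult_uminus_right: "(C::'a::ring_1^'n^'n) ** (- A) = - (C ** A)"
  by (vector matrix_matrix_mult_def sum_negf[symmetric])

lemma trace_cscale: "trace (cscale c A) = c * trace A"
  by (simp add: trace_def cscale_def sum_distrib_left)
lemma trace_scaleR: "trace (r *\<^sub>R (A::'d::finite cmat)) = complex_of_real r * trace A"
  by (simp add: trace_def sum_distrib_left) (simp add: scaleR_conv_of_real)
lemma trace_adjoint_mat: "trace (adjoint_mat A) = cnj (trace A)"
  by (simp add: trace_def adjoint_mat_def)
lemma trace_uminus: "trace (- A) = - trace (A::'a::ring_1^'n^'n)"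
  by (simp add: trace_def sum_negf)
lemma trace_zero [simp]: "trace 0 = 0"
  by (simp add: trace_def)
lemma trace_sum: "trace (\<Sum>k\<in>K. f k) = (\<Sum>k\<in>K. trace (f k :: 'a::comm_semiring_1^'n^'n))"
  by (induction K rule: infinite_finite_induct) (auto simp: trace_add)

lemma mat_pow_commute: "(A::'d::finite cmat) ** mat_pow A n = mat_pow A n ** A"
  using arg_cong[OF power_commutes[of "alg_of A" n], of mat_of]
  by (simp add: mat_of_power)

lemma adjoint_mat_mat_pow: "adjoint_mat (mat_pow A n) = mat_pow (adjoint_mat A) n"
  by (induction n) (auto simp: mat_pow_def adjoint_mat_mult mat_pow_commute[unfolded mat_pow_def])

lemma bounded_linear_adjoint_mat: "bounded_linear (adjoint_mat :: 'd::finite cmat \<Rightarrow> 'd cmat)"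
  by (simp add: linear_conv_bounded_linear[symmetric] linearI)

lemma adjoint_mat_mexp: "adjoint_mat (mexp A) = mexp (adjoint_mat A)"
proof -
  have "(\<lambda>n. adjoint_mat ((1 / fact n :: real) *\<^sub>R mat_pow A n)) sums adjoint_mat (mexp A)"
    using bounded_linear.sums[OF bounded_linear_adjoint_mat mat_pow_series_sums_exp] by (simp add: mexp_eq_exp)
  then have "(\<lambda>n. (1 / fact n :: real) *\<^sub>R mat_pow (adjoint_mat A) n) sums adjoint_mat (mexp A)"
    by (simp add: adjoint_mat_mat_pow)
  then show ?thesis
    unfolding mexp_def by (rule sums_unique)
qed

lemma unitary_mexp:
  assumes "hermitian H"
  shows "adjoint_mat (mexp (cscale \<i> H)) = mexp (cscale (-\<i>) H)"
    and "mexp (cscale \<i> H) ** adjoint_mat (mexp (cscale \<i> H)) = mat 1"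
    and "adjoint_mat (mexp (cscale \<i> H)) ** mexp (cscale \<i> H) = mat 1"
proof -
  show adj: "adjoint_mat (mexp (cscale \<i> H)) = mexp (cscale (-\<i>) H)"
    using assms by (simp add: adjoint_mat_mexp hermitian_def)
  have comm: "cscale \<i> H ** cscale (-\<i>) H = cscale (-\<i>) H ** cscale \<i> H" by simp
  have cancel: "cscale \<i> H + cscale (-\<i>) H = 0" by (simp add: cscale_def vec_eq_iff)
  show "mexp (cscale \<i> H) ** adjoint_mat (mexp (cscale \<i> H)) = mat 1"
    using mexp_add[OF comm] cancel by (simp add: adj mexp_zero)
  show "adjoint_mat (mexp (cscale \<i> H)) ** mexp (cscale \<i> H) = mat 1"
    using mexp_add[OF comm[symmetric]] cancel by (simp add: adj mexp_zero add.commute)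
qed

lemma inner_cmat_eq_trace: "inner (A::'d::finite cmat) B = Re (trace (adjoint_mat A ** B))"
proof -
  have "inner A B = (\<Sum>i\<in>UNIV. \<Sum>j\<in>UNIV. Re (cnj (A$i$j) * B$i$j))"
    by (simp add: inner_vec_def inner_complex_def)
  also have "\<dots> = (\<Sum>j\<in>UNIV. \<Sum>i\<in>UNIV. Re (cnj (A$i$j) * B$i$j))"
    by (rule sum.swap)
  also have "\<dots> = Re (trace (adjoint_mat A ** B))"
    by (simp add: trace_def adjoint_mat_def matrix_matrix_mult_def)
  finally show ?thesis .
qed

section \<open>Positive semidefinite matrices\<close>

lemma quadratic_nonneg_imp_linear_coeff_0:
  fixes c d :: real
  assumes "\<forall>t. 0 \<le> 2*t*c + t^2*d"
  shows "c = 0"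
proof (rule ccontr)
  assume c: "c \<noteq> 0"
  define K where "K = \<bar>d\<bar> + 1"
  have K: "K > 0" "\<bar>d\<bar> \<le> K" by (auto simp: K_def)
  define t where "t = - c / K"
  have "0 \<le> 2*t*c + t^2*d" using assms by blast
  also have "2*t*c + t^2*d = (c^2 / K^2) * (d - 2*K)"
    using K by (simp add: t_def field_simps power2_eq_square)
  also have "\<dots> < 0"
    using K c by (intro mult_pos_neg) (auto simp: abs_le_iff)
  finally show False by simp
qed

definition cform :: "'d::finite cmat \<Rightarrow> complex^'d \<Rightarrow> complex^'d \<Rightarrow> complex" where
  "cform \<sigma> x y = (\<Sum>i\<in>UNIV. cnj (x$i) * (\<sigma> *v y)$i)"

definition pos_semidef :: "'d::finite cmat \<Rightarrow> bool" where
  "pos_semidef \<sigma> \<longleftrightarrow> (\<forall>v. 0 \<le> Re (cform \<sigma> v v))"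

lemma density_operator_hermitian_pos_semidef:
  "density_operator \<rho> \<Longrightarrow> hermitian \<rho> \<and> pos_semidef \<rho>"
  by (simp add: density_operator_def pos_semidef_def cform_def)

lemma cform_expand: "cform \<sigma> x y = (\<Sum>i\<in>UNIV. \<Sum>k\<in>UNIV. cnj (x$i) * \<sigma>$i$k * y$k)"
  by (simp add: cform_def matrix_vector_mult_def sum_distrib_left mult.assoc)

lemma cform_add_left: "cform \<sigma> (x + y) z = cform \<sigma> x z + cform \<sigma> y z"
  by (simp add: cform_expand distrib_right sum.distrib)
lemma cform_add_right: "cform \<sigma> z (x + y) = cform \<sigma> z x + cform \<sigma> z y"
  by (simp add: cform_expand distrib_left distrib_right sum.distrib)
lemma cform_scaleR_left: "cform \<sigma> (t *\<^sub>R x) z = of_real t * cform \<sigma> x z"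
  by (simp add: cform_expand) (simp add: scaleR_conv_of_real sum_distrib_left mult_ac)
lemma cform_scaleR_right: "cform \<sigma> z (t *\<^sub>R x) = of_real t * cform \<sigma> z x"
  by (simp add: cform_expand) (simp add: scaleR_conv_of_real sum_distrib_left mult_ac)

lemma cform_hermitian_swap:
  assumes "hermitian \<sigma>"
  shows "cform \<sigma> y x = cnj (cform \<sigma> x y)"
proof -
  have h: "cnj (\<sigma>$k$i) = \<sigma>$i$k" for i k
    using assms unfolding hermitian_def adjoint_mat_def by (metis vec_lambda_beta)
  have "cnj (cform \<sigma> x y) = (\<Sum>i\<in>UNIV. \<Sum>k\<in>UNIV. x$i * \<sigma>$k$i * cnj (y$k))"
    by (simp add: cform_expand h)
  also have "\<dots> = (\<Sum>k\<in>UNIV. \<Sum>i\<in>UNIV. x$i * \<sigma>$k$i * cnj (y$k))"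
    by (rule sum.swap)
  also have "\<dots> = cform \<sigma> y x"
    by (simp add: cform_expand mult_ac)
  finally show ?thesis by simp
qed

lemma pos_semidef_null_vector:
  assumes h: "hermitian \<sigma>" and p: "pos_semidef \<sigma>" and v: "Re (cform \<sigma> v v) = 0"
  shows "\<sigma> *v v = 0"
proof -
  define w where "w = \<sigma> *v v"
  have "0 \<le> 2*t*Re (cform \<sigma> w v) + t^2 * Re (cform \<sigma> w w)" for t
  proof -
    have "0 \<le> Re (cform \<sigma> (v + t *\<^sub>R w) (v + t *\<^sub>R w))"
      using p pos_semidef_def by blast
    also have "cform \<sigma> (v + t *\<^sub>R w) (v + t *\<^sub>R w) = cform \<sigma> v v + of_real t * cform \<sigma> v w
        + of_real t * cform \<sigma> w v + of_real t * of_real t * cform \<sigma> w w"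
      by (simp add: cform_add_left cform_add_right cform_scaleR_left cform_scaleR_right
          algebra_simps)
    also have "Re \<dots> = 2*t*Re (cform \<sigma> w v) + t^2 * Re (cform \<sigma> w w)"
      using v cform_hermitian_swap[OF h, of v w] by (simp add: power2_eq_square)
    finally show ?thesis .
  qed
  then have "Re (cform \<sigma> w v) = 0"
    using quadratic_nonneg_imp_linear_coeff_0 by blast
  moreover have "Re (cform \<sigma> w v) = (\<Sum>i\<in>UNIV. (cmod (w$i))^2)"
    by (simp add: cform_def flip: w_def cmod_power2 power2_eq_square)
  ultimately have "\<forall>i\<in>UNIV. (cmod (w$i))^2 = 0"
    by (subst sum_nonneg_eq_0_iff[symmetric]) auto
  then show ?thesis by (simp add: vec_eq_iff flip: w_def)
qed

lemma trace_congruence_eq_sum_cform: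
  "trace (adjoint_mat X ** \<sigma> ** X) = (\<Sum>i\<in>UNIV. cform \<sigma> (column i X) (column i X))"
  unfolding trace_def cform_expand column_def
  by (simp add: matrix_matrix_mult_def adjoint_mat_def sum_distrib_right)
    (rule sum.cong[OF refl], subst sum.swap, simp)

lemma Re_trace_congruence_nonneg:
  "pos_semidef \<sigma> \<Longrightarrow> 0 \<le> Re (trace (adjoint_mat X ** \<sigma> ** X))"
  unfolding trace_congruence_eq_sum_cform Re_sum pos_semidef_def by (auto intro: sum_nonneg)

lemma Re_trace_congruence_eq_0_imp:
  assumes h: "hermitian \<sigma>" and p: "pos_semidef \<sigma>"
    and X: "Re (trace (adjoint_mat X ** \<sigma> ** X)) = 0"
  shows "\<sigma> ** X = 0"
proof -
  have "\<forall>i\<in>UNIV. Re (cform \<sigma> (column i X) (column i X)) = 0"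
    using X p unfolding trace_congruence_eq_sum_cform Re_sum pos_semidef_def
    by (subst sum_nonneg_eq_0_iff[symmetric]) auto
  then have "\<sigma> *v column i X = 0" for i
    using pos_semidef_null_vector[OF h p] by blast
  then show ?thesis
    by (simp add: vec_eq_iff matrix_matrix_mult_def matrix_vector_mult_def column_def)
qed

lemma cform_congruence: "cform (adjoint_mat B ** \<sigma> ** B) x y = cform \<sigma> (B *v x) (B *v y)"
proof -
  have "(\<Sum>i\<in>UNIV. cnj (x$i) * (A *v y)$i) = (\<Sum>k\<in>UNIV. cnj ((adjoint_mat A *v x)$k) * y$k)"
    for A :: "'a cmat" and x y
  proof -
    have "(\<Sum>i\<in>UNIV. cnj (x$i) * (A *v y)$i) = (\<Sum>i\<in>UNIV. \<Sum>k\<in>UNIV. cnj (x$i) * A$i$k * y$k)"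
      by (simp add: matrix_vector_mult_def sum_distrib_left mult.assoc)
    also have "\<dots> = (\<Sum>k\<in>UNIV. \<Sum>i\<in>UNIV. cnj (x$i) * A$i$k * y$k)"
      by (rule sum.swap)
    also have "\<dots> = (\<Sum>k\<in>UNIV. cnj ((adjoint_mat A *v x)$k) * y$k)"
      by (simp add: matrix_vector_mult_def adjoint_mat_def sum_distrib_right sum_distrib_left mult_ac)
    finally show ?thesis .
  qed
  then show ?thesis
    unfolding cform_def by (simp flip: matrix_vector_mul_assoc)
qed

lemma pos_semidef_congruence: "pos_semidef \<sigma> \<Longrightarrow> pos_semidef (adjoint_mat B ** \<sigma> ** B)"
  by (simp add: pos_semidef_def cform_congruence)

lemma hermitian_congruence: "hermitian \<sigma> \<Longrightarrow> hermitian (adjoint_mat B ** \<sigma> ** B)"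
  by (simp add: hermitian_def adjoint_mat_mult matrix_mul_assoc)

definition anticomm :: "'d::finite cmat \<Rightarrow> 'd cmat \<Rightarrow> 'd cmat" where
  "anticomm \<sigma> L = L ** \<sigma> + \<sigma> ** L"

(* For positive semidefinite sigma, tr(X* sigma X) and tr(X sigma X* ) have nonnegative real
   parts, while X sigma = - sigma X makes them opposite. *)
lemma anticomm_eq_0_imp:
  assumes h: "hermitian \<sigma>" and p: "pos_semidef \<sigma>" and X: "anticomm \<sigma> X = 0"
  shows "\<sigma> ** X = 0" and "X ** \<sigma> = 0"
proof -
  have sX: "\<sigma> ** X = - (X ** \<sigma>)"
    using X by (simp add: anticomm_def eq_neg_iff_add_eq_0 add.commute)
  have "trace (adjoint_mat X ** \<sigma> ** X) = - trace (adjoint_mat X ** X ** \<sigma>)"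
    by (simp add: sX trace_uminus matrix_mult_uminus_right flip: matrix_mul_assoc)
  also have "trace (adjoint_mat X ** X ** \<sigma>) = trace (X ** \<sigma> ** adjoint_mat X)"
    using trace_mul_sym[of "adjoint_mat X" "X ** \<sigma>"] by (simp add: matrix_mul_assoc)
  also have "X ** \<sigma> ** adjoint_mat X
      = adjoint_mat (adjoint_mat X) ** \<sigma> ** adjoint_mat X" by simp
  finally have "Re (trace (adjoint_mat X ** \<sigma> ** X)) = 0"
    using Re_trace_congruence_nonneg[OF p, of X] Re_trace_congruence_nonneg[OF p, of "adjoint_mat X"]
    by simp
  then show "\<sigma> ** X = 0" by (rule Re_trace_congruence_eq_0_imp[OF h p])
  then show "X ** \<sigma> = 0" using sX by simp
qed

section \<open>Symmetric logarithmic derivatives\<close>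

lemma in_range_self_adjoint:
  fixes f :: "'a::euclidean_space \<Rightarrow> 'a"
  assumes lin: "linear f" and sa: "\<And>x y. inner (f x) y = inner x (f y)"
    and orth: "\<And>x. f x = 0 \<Longrightarrow> inner x y = 0"
  shows "y \<in> range f"
proof -
  have "adjoint f = f"
    using sa by (simp add: adjoint_unique)
  then have "f -` {0} = (range f)\<^sup>\<bottom>"
    using ker_orthogonal_comp_adjoint[OF lin] by simp
  moreover have "y \<in> (f -` {0})\<^sup>\<bottom>"
    using orth by (auto simp: orthogonal_comp_def orthogonal_def inner_commute)
  ultimately show ?thesis
    using orthogonal_comp_self[OF linear_subspace_image[OF lin subspace_UNIV]] by simp
qed

lemma linear_anticomm: "linear (anticomm \<sigma>)"
  by (rule linearI)
    (simp_all add: anticomm_def matrix_add_ldistrib matrix_add_rdistrib matrix_scalar_ac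
      scaleR_right_distrib flip: scalar_matrix_assoc)

lemma anticomm_self_adjoint:
  assumes "hermitian \<sigma>"
  shows "inner (anticomm \<sigma> A) B = inner A (anticomm \<sigma> B)"
proof -
  have "inner (anticomm \<sigma> A) B
      = Re (trace (\<sigma> ** (adjoint_mat A ** B)) + trace (adjoint_mat A ** \<sigma> ** B))"
    by (simp add: inner_cmat_eq_trace anticomm_def adjoint_mat_mult hermitian_adjoint_eq[OF assms]
        matrix_add_rdistrib trace_add matrix_mul_assoc)
  also have "trace (\<sigma> ** (adjoint_mat A ** B)) = trace (adjoint_mat A ** B ** \<sigma>)"
    by (rule trace_mul_sym)
  also have "Re (trace (adjoint_mat A ** B ** \<sigma>) + trace (adjoint_mat A ** \<sigma> ** B))
      = inner A (anticomm \<sigma> B)"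
    by (simp add: inner_cmat_eq_trace anticomm_def matrix_add_ldistrib trace_add matrix_mul_assoc)
  finally show ?thesis .
qed

lemma anticomm_adjoint_mat:
  "hermitian \<sigma> \<Longrightarrow> anticomm \<sigma> (adjoint_mat L) = adjoint_mat (anticomm \<sigma> L)"
  by (simp add: anticomm_def adjoint_mat_mult hermitian_adjoint_eq add.commute)

(* anticomm sigma is self-adjoint for the trace inner product, and 2i[W, sigma] is orthogonal
   to its kernel, hence lies in its range. *)
lemma SLD_equation_solvable:
  assumes h: "hermitian \<sigma>" and p: "pos_semidef \<sigma>" and hW: "hermitian W"
  shows "\<exists>L. hermitian L \<and> (1/2) *\<^sub>R (L ** \<sigma> + \<sigma> ** L) = cscale \<i> (W ** \<sigma> - \<sigma> ** W)"
proof -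
  define D where "D = cscale (2*\<i>) (W ** \<sigma> - \<sigma> ** W)"
  have "D \<in> range (anticomm \<sigma>)"
  proof (rule in_range_self_adjoint[OF linear_anticomm anticomm_self_adjoint[OF h]])
    fix X
    assume "anticomm \<sigma> X = 0"
    then have "\<sigma> ** X = 0" "X ** \<sigma> = 0"
      using anticomm_eq_0_imp[OF h p] by blast+
    then have X\<sigma>: "adjoint_mat X ** \<sigma> = 0" and \<sigma>X: "\<sigma> ** adjoint_mat X = 0"
      using adjoint_mat_mult[of \<sigma> X] adjoint_mat_mult[of X \<sigma>] by (simp_all add: hermitian_adjoint_eq[OF h])
    have "trace (adjoint_mat X ** (W ** \<sigma>)) = 0"
      using trace_mul_sym[of "adjoint_mat X ** W" \<sigma>] \<sigma>X by (simp add: matrix_mul_assoc)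
    moreover have "trace (adjoint_mat X ** (\<sigma> ** W)) = 0"
      using X\<sigma> by (simp add: matrix_mul_assoc)
    ultimately show "inner X D = 0"
      by (simp add: inner_cmat_eq_trace D_def matrix_diff_ldistrib trace_cscale trace_sub)
  qed
  then obtain L0 where L0: "anticomm \<sigma> L0 = D" by blast
  have "adjoint_mat D = D"
    by (simp add: D_def adjoint_mat_mult hermitian_adjoint_eq[OF h] hermitian_adjoint_eq[OF hW]
        cscale_diff cscale_uminus_left)
  define L where "L = (1/2) *\<^sub>R (L0 + adjoint_mat L0)"
  have "hermitian L" by (simp add: L_def hermitian_def add.commute)
  moreover have "anticomm \<sigma> L = D"
    using linear_anticomm[of \<sigma>] L0 anticomm_adjoint_mat[OF h, of L0] \<open>adjoint_mat D = D\<close>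
    by (simp add: L_def linear_scale linear_add scaleR_2[symmetric] del: scaleR_2)
  moreover have "(1/2) *\<^sub>R D = cscale \<i> (W ** \<sigma> - \<sigma> ** W)"
    by (simp add: D_def scaleR_eq_cscale)
  ultimately show ?thesis by (auto simp: anticomm_def)
qed

(* SLDs L_j of a state sigma whose partial derivatives are i[W_j, sigma]. *)
definition solves_SLD :: "'d::finite cmat \<Rightarrow> ('n \<Rightarrow> 'd cmat) \<Rightarrow> ('n \<Rightarrow> 'd cmat) \<Rightarrow> bool" where
  "solves_SLD \<sigma> W L \<longleftrightarrow> (\<forall>j. hermitian (L j) \<and>
     (1/2) *\<^sub>R (L j ** \<sigma> + \<sigma> ** L j) = cscale \<i> (W j ** \<sigma> - \<sigma> ** W j))"

definition qfi_of_SLD :: "'d::finite cmat \<Rightarrow> ('n::finite \<Rightarrow> 'd cmat) \<Rightarrow> real^'n^'n" where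
  "qfi_of_SLD \<sigma> L = (\<chi> j k. Re (trace (L j ** L k ** \<sigma>)))"

lemma solves_SLD_exists:
  assumes "hermitian \<sigma>" and "pos_semidef \<sigma>" and "\<forall>j. hermitian (W j)"
  shows "\<exists>L. solves_SLD \<sigma> W L"
proof -
  have "\<forall>j. \<exists>Lj. hermitian Lj \<and>
      (1/2) *\<^sub>R (Lj ** \<sigma> + \<sigma> ** Lj) = cscale \<i> (W j ** \<sigma> - \<sigma> ** W j)"
    using SLD_equation_solvable[OF assms(1,2)] assms(3) by blast
  then show ?thesis
    unfolding solves_SLD_def by (rule choice)
qed


lemma qfi_of_SLD_unique:
  assumes h: "hermitian \<sigma>" and p: "pos_semidef \<sigma>"
    and L: "solves_SLD \<sigma> W L" and L': "solves_SLD \<sigma> W L'"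
  shows "qfi_of_SLD \<sigma> L = qfi_of_SLD \<sigma> L'"
proof -
  define X where "X j = L j - L' j" for j
  have "anticomm \<sigma> (X j) = 0" for j
  proof -
    have "(1/2::real) *\<^sub>R anticomm \<sigma> (L j) = (1/2::real) *\<^sub>R anticomm \<sigma> (L' j)"
      using L L' unfolding solves_SLD_def anticomm_def by metis
    then show ?thesis by (simp add: X_def linear_diff[OF linear_anticomm])
  qed
  then have \<sigma>X: "\<sigma> ** X j = 0" and X\<sigma>: "X j ** \<sigma> = 0" for j
    using anticomm_eq_0_imp[OF h p] by blast+
  have L\<sigma>: "L k ** \<sigma> = L' k ** \<sigma>" for k
    using X\<sigma>[of k] by (simp add: X_def matrix_diff_rdistrib)
  have "trace (L j ** L k ** \<sigma>) = trace (L' j ** L' k ** \<sigma>)" for j k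
  proof -
    have "L j ** L k ** \<sigma> = L' j ** (L' k ** \<sigma>) + X j ** (L' k ** \<sigma>)"
      by (simp add: L\<sigma> X_def matrix_diff_rdistrib flip: matrix_mul_assoc)
    moreover have "trace (X j ** (L' k ** \<sigma>)) = 0"
      using trace_mul_sym[of "X j" "L' k ** \<sigma>"] \<sigma>X[of j] by (simp flip: matrix_mul_assoc)
    ultimately show ?thesis by (simp add: trace_add matrix_mul_assoc)
  qed
  then show ?thesis by (simp add: qfi_of_SLD_def)
qed

lemma solves_SLD_unitary_conj:
  assumes U: "U ** adjoint_mat U = mat 1" "adjoint_mat U ** U = mat 1"
    and UW: "\<forall>j. U ** W j = W j ** U" and L: "solves_SLD \<sigma> W L"
  shows "solves_SLD (U ** \<sigma> ** adjoint_mat U) W (\<lambda>j. U ** L j ** adjoint_mat U)"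
  unfolding solves_SLD_def
proof (intro allI conjI)
  fix j
  have cancel: "A ** adjoint_mat U ** U = A" "A ** U ** adjoint_mat U = A" for A
    by (simp_all add: U flip: matrix_mul_assoc)
  have "adjoint_mat U ** (U ** W j) ** adjoint_mat U = adjoint_mat U ** (W j ** U) ** adjoint_mat U"
    using UW by simp
  then have WU: "W j ** adjoint_mat U = adjoint_mat U ** W j"
    by (simp add: matrix_mul_assoc U cancel)
  show "hermitian (U ** L j ** adjoint_mat U)"
    using L by (simp add: solves_SLD_def hermitian_def adjoint_mat_mult matrix_mul_assoc)
  have "(1/2) *\<^sub>R (U ** L j ** adjoint_mat U ** (U ** \<sigma> ** adjoint_mat U)
      + U ** \<sigma> ** adjoint_mat U ** (U ** L j ** adjoint_mat U))
     = U ** ((1/2) *\<^sub>R (L j ** \<sigma> + \<sigma> ** L j)) ** adjoint_mat U"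
    by (simp add: matrix_mul_assoc cancel matrix_scalar_ac
        matrix_add_ldistrib matrix_add_rdistrib scaleR_right_distrib flip: scalar_matrix_assoc)
  also have "\<dots> = U ** cscale \<i> (W j ** \<sigma> - \<sigma> ** W j) ** adjoint_mat U"
    using L by (simp add: solves_SLD_def)
  also have "\<dots> = cscale \<i> (U ** W j ** \<sigma> ** adjoint_mat U - U ** \<sigma> ** (W j ** adjoint_mat U))"
    by (simp add: matrix_diff_rdistrib matrix_diff_ldistrib matrix_mul_assoc)
  also have "\<dots> = cscale \<i> (W j ** (U ** \<sigma> ** adjoint_mat U) - U ** \<sigma> ** adjoint_mat U ** W j)"
    by (simp add: UW WU matrix_mul_assoc)
  finally show "(1/2) *\<^sub>R (U ** L j ** adjoint_mat U ** (U ** \<sigma> ** adjoint_mat U)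
      + U ** \<sigma> ** adjoint_mat U ** (U ** L j ** adjoint_mat U))
     = cscale \<i> (W j ** (U ** \<sigma> ** adjoint_mat U) - U ** \<sigma> ** adjoint_mat U ** W j)" .
qed

lemma qfi_of_SLD_unitary_conj:
  assumes U: "adjoint_mat U ** U = mat 1"
  shows "qfi_of_SLD (U ** \<sigma> ** adjoint_mat U) (\<lambda>j. U ** L j ** adjoint_mat U) = qfi_of_SLD \<sigma> L"
proof -
  have cancel: "A ** adjoint_mat U ** U = A" for A
    by (simp add: U flip: matrix_mul_assoc)
  have "U ** L j ** adjoint_mat U ** (U ** L k ** adjoint_mat U) ** (U ** \<sigma> ** adjoint_mat U)
      = U ** (L j ** L k ** \<sigma> ** adjoint_mat U)" for j k
    by (simp add: matrix_mul_assoc cancel)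
  then have "trace (U ** L j ** adjoint_mat U ** (U ** L k ** adjoint_mat U) ** (U ** \<sigma> ** adjoint_mat U))
      = trace (L j ** L k ** \<sigma>)" for j k
    using trace_mul_sym[of U "L j ** L k ** \<sigma> ** adjoint_mat U"] by (simp add: cancel)
  then show ?thesis by (simp add: qfi_of_SLD_def)
qed

definition mix :: "real^'n^'n \<Rightarrow> ('n::finite \<Rightarrow> 'd::finite cmat) \<Rightarrow> 'n \<Rightarrow> 'd cmat" where
  "mix S L = (\<lambda>j. \<Sum>k\<in>UNIV. S$j$k *\<^sub>R L k)"

lemma hermitian_mix: "\<forall>j. hermitian (L j) \<Longrightarrow> hermitian (mix S L j)"
  by (simp add: mix_def hermitian_def adjoint_mat_sum)

lemma mix_mult: "mix S A j ** mix T B l = (\<Sum>m\<in>UNIV. \<Sum>k\<in>UNIV. (S$j$k * T$l$m) *\<^sub>R (A k ** B m))"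
  by (simp add: mix_def matrix_mult_sum_left matrix_mult_sum_right matrix_scalar_ac
      scaleR_sum_right mult.commute flip: scalar_matrix_assoc)

lemma solves_SLD_mix:
  assumes L: "solves_SLD \<sigma> W L"
  shows "solves_SLD \<sigma> (mix S W) (mix S L)"
  unfolding solves_SLD_def
proof (intro allI conjI)
  fix j
  show "hermitian (mix S L j)"
    using L by (simp add: solves_SLD_def hermitian_mix)
  have "(1/2) *\<^sub>R (mix S L j ** \<sigma> + \<sigma> ** mix S L j)
      = (\<Sum>k\<in>UNIV. S$j$k *\<^sub>R ((1/2) *\<^sub>R (L k ** \<sigma> + \<sigma> ** L k)))"
    by (simp add: mix_def matrix_mult_sum_left matrix_mult_sum_right matrix_scalar_ac
        scaleR_sum_right sum.distrib[symmetric] scaleR_right_distrib flip: scalar_matrix_assoc)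
  also have "\<dots> = (\<Sum>k\<in>UNIV. S$j$k *\<^sub>R cscale \<i> (W k ** \<sigma> - \<sigma> ** W k))"
    using L by (simp add: solves_SLD_def)
  also have "\<dots> = cscale \<i> (mix S W j ** \<sigma> - \<sigma> ** mix S W j)"
    by (simp add: mix_def matrix_mult_sum_left matrix_mult_sum_right matrix_scalar_ac
        cscale_sum cscale_scaleR cscale_diff sum_subtractf scaleR_diff_right flip: scalar_matrix_assoc)
  finally show "(1/2) *\<^sub>R (mix S L j ** \<sigma> + \<sigma> ** mix S L j)
      = cscale \<i> (mix S W j ** \<sigma> - \<sigma> ** mix S W j)" .
qed

lemma qfi_of_SLD_mix: "qfi_of_SLD \<sigma> (mix S L) = S ** qfi_of_SLD \<sigma> L ** transpose S"
proof -
  have "Re (trace (mix S L j ** mix S L l ** \<sigma>))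
      = (\<Sum>m\<in>UNIV. \<Sum>k\<in>UNIV. (S$j$k * S$l$m) * Re (trace (L k ** L m ** \<sigma>)))" for j l
    by (simp add: mix_mult matrix_mult_sum_left trace_sum trace_scaleR flip: scalar_matrix_assoc)
  then show ?thesis
    by (simp add: qfi_of_SLD_def vec_eq_iff matrix_matrix_mult_def transpose_def
        sum_distrib_right sum_distrib_left mult_ac)
qed

lemma qfi_of_SLD_symmetric:
  assumes "hermitian \<sigma>" and "\<forall>j. hermitian (L j)"
  shows "transpose (qfi_of_SLD \<sigma> L) = qfi_of_SLD \<sigma> L"
proof -
  have "Re (trace (L k ** L j ** \<sigma>)) = Re (trace (L j ** L k ** \<sigma>))" for j k
  proof -
    have "trace (L k ** L j ** \<sigma>) = cnj (trace (adjoint_mat (L k ** L j ** \<sigma>)))"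
      by (simp add: trace_adjoint_mat)
    also have "adjoint_mat (L k ** L j ** \<sigma>) = \<sigma> ** (L j ** L k)"
      using assms by (simp add: adjoint_mat_mult hermitian_def matrix_mul_assoc)
    also have "trace (\<sigma> ** (L j ** L k)) = trace (L j ** L k ** \<sigma>)"
      by (rule trace_mul_sym)
    finally show ?thesis by simp
  qed
  then show ?thesis by (simp add: qfi_of_SLD_def transpose_def vec_eq_iff)
qed

section \<open>Quantum Fisher information of unitary families\<close>

definition hamiltonian :: "('n::finite \<Rightarrow> 'd::finite cmat) \<Rightarrow> real^'n \<Rightarrow> 'd cmat" where
  "hamiltonian Z \<theta> = (\<Sum>j\<in>UNIV. \<theta>$j *\<^sub>R Z j)"

lemma unitary_family_eq:
  "unitary_family Z \<rho> \<theta> =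
     mexp (cscale \<i> (hamiltonian Z \<theta>)) ** \<rho> ** mexp (cscale (-\<i>) (hamiltonian Z \<theta>))"
  by (simp add: unitary_family_def hamiltonian_def Let_def)

lemma hamiltonian_axis: "hamiltonian Z (\<theta> + t *\<^sub>R axis j 1) = hamiltonian Z \<theta> + t *\<^sub>R Z j"
proof -
  have "hamiltonian Z (\<theta> + t *\<^sub>R axis j 1)
      = (\<Sum>k\<in>UNIV. \<theta>$k *\<^sub>R Z k + (if k = j then t *\<^sub>R Z k else 0))"
    unfolding hamiltonian_def by (rule sum.cong) (auto simp: axis_def scaleR_add_left)
  then show ?thesis by (simp add: sum.distrib hamiltonian_def)
qed

lemma hamiltonian_commute:
  assumes "\<forall>j k. Z j ** Z k = Z k ** Z j"
  shows "hamiltonian Z \<theta> ** Z j = Z j ** hamiltonian Z \<theta>"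
  using assms
  by (simp add: hamiltonian_def matrix_mult_sum_left matrix_mult_sum_right matrix_scalar_ac
      flip: scalar_matrix_assoc)

lemma hermitian_hamiltonian: "\<forall>j. hermitian (Z j) \<Longrightarrow> hermitian (hamiltonian Z \<theta>)"
  by (simp add: hamiltonian_def hermitian_def adjoint_mat_sum)

lemma has_vector_derivative_exp_sandwich:
  fixes U R V \<alpha> \<beta> :: "'a::{real_normed_algebra_1,banach}"
  shows "((\<lambda>t. U * (exp (t *\<^sub>R \<alpha>) * R * exp (t *\<^sub>R \<beta>)) * V) has_vector_derivative
          U * (R * \<beta> + \<alpha> * R) * V) (at 0)"
proof -
  have "((\<lambda>t. exp (t *\<^sub>R \<alpha>)) has_vector_derivative \<alpha>) (at 0)"
    and "((\<lambda>t. exp (t *\<^sub>R \<beta>)) has_vector_derivative \<beta>) (at 0)"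
    using exp_scaleR_has_vector_derivative_right[of _ 0 UNIV] by simp_all
  then have "((\<lambda>t. exp (t *\<^sub>R \<alpha>) * R * exp (t *\<^sub>R \<beta>)) has_vector_derivative
      exp (0 *\<^sub>R \<alpha>) * R * \<beta> + \<alpha> * R * exp (0 *\<^sub>R \<beta>)) (at 0)"
    by (intro has_vector_derivative_mult has_vector_derivative_mult_left)
  then show ?thesis
    by (intro has_vector_derivative_mult_left has_vector_derivative_mult_right) simp
qed

(* The generators commute with U_theta, so moving along the j-th axis conjugates rho_theta
   by exp(i t Z_j). *)
lemma unitary_family_partial_derivative:
  assumes comm: "\<forall>j k. Z j ** Z k = Z k ** Z j"
  shows "((\<lambda>t. unitary_family Z \<rho> (\<theta> + t *\<^sub>R axis j 1)) has_vector_derivative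
          cscale \<i> (Z j ** unitary_family Z \<rho> \<theta> - unitary_family Z \<rho> \<theta> ** Z j)) (at 0)"
proof -
  define H where "H = hamiltonian Z \<theta>"
  define a where "a = cscale \<i> (Z j)"
  define b where "b = cscale (-\<i>) (Z j)"
  define U where "U = mexp (cscale \<i> H)"
  define V where "V = mexp (cscale (-\<i>) H)"
  have HZ: "H ** Z j = Z j ** H"
    unfolding H_def by (rule hamiltonian_commute[OF comm])
  have "cscale \<i> H ** (t *\<^sub>R a) = (t *\<^sub>R a) ** cscale \<i> H"
    and "(t *\<^sub>R b) ** cscale (-\<i>) H = cscale (-\<i>) H ** (t *\<^sub>R b)" for t
    by (simp_all add: a_def b_def HZ cscale_scaleR matrix_scalar_ac flip: scalar_matrix_assoc)
  then have "mexp (cscale \<i> H + t *\<^sub>R a) = U ** mexp (t *\<^sub>R a)"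
    and "mexp (t *\<^sub>R b + cscale (-\<i>) H) = mexp (t *\<^sub>R b) ** V" for t
    by (simp_all add: U_def V_def mexp_add)
  moreover have "cscale \<i> (hamiltonian Z (\<theta> + t *\<^sub>R axis j 1)) = cscale \<i> H + t *\<^sub>R a"
    and "cscale (-\<i>) (hamiltonian Z (\<theta> + t *\<^sub>R axis j 1)) = t *\<^sub>R b + cscale (-\<i>) H" for t
    by (simp_all add: hamiltonian_axis a_def b_def cscale_add cscale_scaleR add.commute
        flip: H_def)
  ultimately have path: "unitary_family Z \<rho> (\<theta> + t *\<^sub>R axis j 1) =
      mat_of (alg_of U * (exp (t *\<^sub>R alg_of a) * alg_of \<rho> * exp (t *\<^sub>R alg_of b)) * alg_of V)"
    for t
    by (simp add: unitary_family_eq mexp_eq_exp alg_of_scaleR matrix_mul_assoc)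
  have d: "((\<lambda>t. unitary_family Z \<rho> (\<theta> + t *\<^sub>R axis j 1)) has_vector_derivative
      mat_of (alg_of U * (alg_of \<rho> * alg_of b + alg_of a * alg_of \<rho>) * alg_of V)) (at 0)"
    unfolding path
    by (rule bounded_linear.has_vector_derivative[OF bounded_linear_mat_of
          has_vector_derivative_exp_sandwich])
  have ZU: "Z j ** U = U ** Z j" and ZV: "Z j ** V = V ** Z j"
    unfolding U_def V_def by (simp_all add: mexp_commute HZ)
  have fam: "unitary_family Z \<rho> \<theta> = U ** \<rho> ** V"
    by (simp add: unitary_family_eq U_def V_def H_def)
  have "mat_of (alg_of U * (alg_of \<rho> * alg_of b + alg_of a * alg_of \<rho>) * alg_of V)
      = cscale (-\<i>) (U ** \<rho> ** (Z j ** V)) + cscale \<i> ((U ** Z j) ** \<rho> ** V)"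
    by (simp add: a_def b_def matrix_add_ldistrib matrix_add_rdistrib matrix_mul_assoc)
  also have "\<dots> = cscale \<i> (Z j ** unitary_family Z \<rho> \<theta> - unitary_family Z \<rho> \<theta> ** Z j)"
    unfolding fam ZV ZU[symmetric] by (simp add: cscale_diff cscale_uminus_left matrix_mul_assoc)
  finally show ?thesis
    using d by simp
qed

lemma is_SLD_unitary_family_iff:
  assumes "\<forall>j k. Z j ** Z k = Z k ** Z j"
  shows "is_SLD (unitary_family Z \<rho>) \<theta> L \<longleftrightarrow> solves_SLD (unitary_family Z \<rho> \<theta>) Z L"
  unfolding is_SLD_def solves_SLD_def
  using unitary_family_partial_derivative[OF assms] vector_derivative_unique_at by metis


lemma qfi_matrix_unitary_family:
  assumes d: "density_operator \<rho>" and hZ: "\<forall>j. hermitian (Z j)"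
    and comm: "\<forall>j k. Z j ** Z k = Z k ** Z j" and L: "solves_SLD \<rho> Z L"
  shows "qfi_matrix (unitary_family Z \<rho>) \<theta> = qfi_of_SLD \<rho> L"
proof -
  define U where "U = mexp (cscale \<i> (hamiltonian Z \<theta>))"
  note U = unitary_mexp[OF hermitian_hamiltonian[OF hZ], of \<theta>, folded U_def]
  have fam: "unitary_family Z \<rho> \<theta> = U ** \<rho> ** adjoint_mat U"
    by (simp add: unitary_family_eq U_def U(1)[unfolded U_def])
  have \<rho>: "hermitian \<rho>" "pos_semidef \<rho>"
    using density_operator_hermitian_pos_semidef[OF d] by auto
  have "\<forall>j. U ** Z j = Z j ** U"
    unfolding U_def by (metis mexp_commute hamiltonian_commute[OF comm] cscale_mult_left
        cscale_mult_right)
  then have L_U: "solves_SLD (U ** \<rho> ** adjoint_mat U) Z (\<lambda>j. U ** L j ** adjoint_mat U)"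
    by (rule solves_SLD_unitary_conj[OF U(2,3) _ L])
  define L' where "L' = (SOME L. is_SLD (unitary_family Z \<rho>) \<theta> L)"
  have "is_SLD (unitary_family Z \<rho>) \<theta> L'"
    unfolding L'_def by (rule someI[of _ "\<lambda>j. U ** L j ** adjoint_mat U"])
      (simp add: is_SLD_unitary_family_iff[OF comm] fam L_U)
  then have L': "solves_SLD (U ** \<rho> ** adjoint_mat U) Z L'"
    by (simp add: is_SLD_unitary_family_iff[OF comm] fam)
  have "hermitian (U ** \<rho> ** adjoint_mat U)" "pos_semidef (U ** \<rho> ** adjoint_mat U)"
    using hermitian_congruence[OF \<rho>(1), of "adjoint_mat U"]
      pos_semidef_congruence[OF \<rho>(2), of "adjoint_mat U"] by simp_all
  then have "qfi_matrix (unitary_family Z \<rho>) \<theta>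
      = qfi_of_SLD (U ** \<rho> ** adjoint_mat U) (\<lambda>j. U ** L j ** adjoint_mat U)"
    using qfi_of_SLD_unique[OF _ _ L' L_U]
    by (simp add: qfi_matrix_def qfi_of_SLD_def fam flip: L'_def)
  also have "\<dots> = qfi_of_SLD \<rho> L"
    by (rule qfi_of_SLD_unitary_conj[OF U(3)])
  finally show ?thesis .
qed

lemma mix_commute:
  assumes "\<forall>j k. Z j ** Z k = Z k ** Z j"
  shows "\<forall>j l. mix S Z j ** mix S Z l = mix S Z l ** mix S Z j"
proof (intro allI)
  fix j l
  have "mix S Z l ** mix S Z j = (\<Sum>m\<in>UNIV. \<Sum>k\<in>UNIV. (S$l$k * S$j$m) *\<^sub>R (Z k ** Z m))"
    by (rule mix_mult)
  also have "\<dots> = (\<Sum>k\<in>UNIV. \<Sum>m\<in>UNIV. (S$l$k * S$j$m) *\<^sub>R (Z k ** Z m))"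
    by (rule sum.swap)
  also have "\<dots> = (\<Sum>k\<in>UNIV. \<Sum>m\<in>UNIV. (S$j$m * S$l$k) *\<^sub>R (Z m ** Z k))"
    by (intro sum.cong refl) (metis assms mult.commute)
  also have "\<dots> = mix S Z j ** mix S Z l"
    by (rule mix_mult[symmetric])
  finally show "mix S Z j ** mix S Z l = mix S Z l ** mix S Z j" ..
qed

lemma qfi_matrix_mix:
  assumes d: "density_operator \<rho>" and hZ: "\<forall>j. hermitian (Z j)"
    and comm: "\<forall>j k. Z j ** Z k = Z k ** Z j"
  shows "qfi_matrix (unitary_family (mix S Z) \<rho>) \<theta>
       = S ** qfi_matrix (unitary_family Z \<rho>) \<theta> ** transpose S"
proof -
  obtain L where L: "solves_SLD \<rho> Z L"
    using solves_SLD_exists density_operator_hermitian_pos_semidef[OF d] hZ by blast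
  have "qfi_matrix (unitary_family (mix S Z) \<rho>) \<theta> = qfi_of_SLD \<rho> (mix S L)"
    using qfi_matrix_unitary_family[OF d _ mix_commute[OF comm] solves_SLD_mix[OF L]] hZ
    by (simp add: hermitian_mix)
  then show ?thesis
    by (simp add: qfi_matrix_unitary_family[OF d hZ comm L] qfi_of_SLD_mix)
qed

lemma qfi_matrix_symmetric:
  assumes d: "density_operator \<rho>" and hZ: "\<forall>j. hermitian (Z j)"
    and comm: "\<forall>j k. Z j ** Z k = Z k ** Z j"
  shows "transpose (qfi_matrix (unitary_family Z \<rho>) \<theta>) = qfi_matrix (unitary_family Z \<rho>) \<theta>"
proof -
  have \<rho>: "hermitian \<rho>" "pos_semidef \<rho>"
    using density_operator_hermitian_pos_semidef[OF d] by auto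
  obtain L where L: "solves_SLD \<rho> Z L"
    using solves_SLD_exists[OF \<rho> hZ] by blast
  then have "\<forall>j. hermitian (L j)"
    by (simp add: solves_SLD_def)
  then show ?thesis
    by (simp add: qfi_matrix_unitary_family[OF d hZ comm L] qfi_of_SLD_symmetric[OF \<rho>(1)])
qed

section \<open>Diagonalization of real symmetric matrices\<close>

lemma symmetric_matrix_inner:
  fixes A :: "real^'n^'n"
  assumes "transpose A = A"
  shows "inner (A *v x) y = inner x (A *v y)"
  by (metis assms dot_lmul_matrix transpose_matrix_vector)

(* The Rayleigh quotient is stationary at u along every direction w orthogonal to u,
   which forces A u to have no component orthogonal to u. *)
lemma rayleigh_maximizer_eigenvector:
  fixes A :: "real^'n^'n"
  assumes A: "transpose A = A" and V: "subspace V" and inv: "\<forall>x\<in>V. A *v x \<in> V"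
    and u: "u \<in> V" "norm u = 1"
    and max: "\<forall>y\<in>V. norm y = 1 \<longrightarrow> inner y (A *v y) \<le> inner u (A *v u)"
  shows "A *v u = inner u (A *v u) *\<^sub>R u"
proof -
  define m where "m = inner u (A *v u)"
  have uu: "inner u u = 1" using u(2) by (simp add: dot_square_norm)
  have orth: "inner w (A *v u) = 0" if w: "w \<in> V" "inner w u = 0" for w
  proof -
    have "0 \<le> 2*t*(- inner w (A *v u)) + t^2 * (m * inner w w - inner w (A *v w))" for t
    proof -
      define x where "x = u + t *\<^sub>R w"
      have xV: "x \<in> V" using V u w by (simp add: x_def subspace_add subspace_scale)
      have xx: "inner x x = 1 + t^2 * inner w w"
        using w uu by (simp add: x_def inner_add_left inner_add_right inner_commute power2_eq_square)
      then have "norm x > 0"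
        by (metis add_pos_nonneg inner_ge_zero mult_nonneg_nonneg zero_le_power2 zero_less_one
            inner_gt_zero_iff zero_less_norm_iff)
      define y where "y = (1 / norm x) *\<^sub>R x"
      have "y \<in> V" "norm y = 1"
        using V xV \<open>norm x > 0\<close> by (simp_all add: y_def subspace_scale)
      moreover have "inner y (A *v y) = inner x (A *v x) / (norm x)^2"
        by (simp add: y_def matrix_vector_mult_scaleR power2_eq_square)
      ultimately have "inner x (A *v x) / (norm x)^2 \<le> m"
        using max unfolding m_def by metis
      then have "inner x (A *v x) \<le> m * inner x x"
        using \<open>norm x > 0\<close> by (simp add: divide_le_eq dot_square_norm mult.commute)
      moreover have "inner x (A *v x) = m + 2*t*inner w (A *v u) + t^2 * inner w (A *v w)"
        using symmetric_matrix_inner[OF A, of u w]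
        by (simp add: x_def m_def matrix_vector_right_distrib matrix_vector_mult_scaleR
            inner_add_left inner_add_right inner_commute power2_eq_square algebra_simps)
      ultimately show ?thesis using xx by (simp add: algebra_simps)
    qed
    then show ?thesis
      using quadratic_nonneg_imp_linear_coeff_0 by fastforce
  qed
  define r where "r = A *v u - m *\<^sub>R u"
  have "r \<in> V" using V inv u by (simp add: r_def subspace_diff subspace_scale)
  moreover have ru: "inner r u = 0"
    using uu by (simp add: r_def m_def inner_diff_left inner_diff_right inner_commute)
  ultimately have "inner r r = 0"
    using orth by (simp add: r_def inner_diff_right ru)
  then show ?thesis by (simp add: r_def m_def)
qed

lemma invariant_subspace_orthonormal_eigenbasis:
  fixes A :: "real^'n^'n"
  assumes A: "transpose A = A"
  shows "subspace V \<Longrightarrow> \<forall>x\<in>V. A *v x \<in> V \<Longrightarrow> \<exists>B. B \<subseteq> V \<and> finite B \<and> pairwise orthogonal B \<and>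
     (\<forall>b\<in>B. norm b = 1 \<and> (\<exists>c. A *v b = c *\<^sub>R b)) \<and> V \<subseteq> span B"
proof (induction "dim V" arbitrary: V rule: less_induct)
  case less
  note V = less.prems(1) and inv = less.prems(2)
  show ?case
  proof (cases "V \<subseteq> {0}")
    case True
    then show ?thesis by (intro exI[of _ "{}"]) auto
  next
    case False
    then obtain v where v: "v \<in> V" "v \<noteq> 0" by auto
    define K where "K = sphere (0::real^'n) 1 \<inter> V"
    have "compact K"
      unfolding K_def by (rule compact_Int_closed) (auto intro: closed_subspace V)
    moreover have "(1 / norm v) *\<^sub>R v \<in> K"
      using v V by (simp add: K_def subspace_scale)
    moreover have "continuous_on K (\<lambda>y. inner y (A *v y))"
      by (intro continuous_intros linear_continuous_on)
        (simp add: linear_conv_bounded_linear[symmetric])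
    ultimately obtain u where "u \<in> K" and umax: "\<forall>y\<in>K. inner y (A *v y) \<le> inner u (A *v u)"
      using continuous_attains_sup[of K] by blast
    then have u: "u \<in> V" "norm u = 1" by (auto simp: K_def)
    define m where "m = inner u (A *v u)"
    have eig: "A *v u = m *\<^sub>R u"
      unfolding m_def by (rule rayleigh_maximizer_eigenvector[OF A V inv u])
        (use umax in \<open>auto simp: K_def\<close>)
    have uu: "inner u u = 1" using u(2) by (simp add: dot_square_norm)
    define V' where "V' = {x\<in>V. inner u x = 0}"
    have V': "subspace V'"
      using V unfolding V'_def subspace_def by (auto simp: inner_add_right)
    have inv': "\<forall>x\<in>V'. A *v x \<in> V'"
    proof
      fix x
      assume x: "x \<in> V'"
      have "inner u (A *v x) = inner (A *v u) x"
        using symmetric_matrix_inner[OF A, of u x] by simp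
      also have "\<dots> = 0" using x by (simp add: eig V'_def)
      finally show "A *v x \<in> V'" using x inv by (simp add: V'_def)
    qed
    have "u \<notin> V'" using uu by (simp add: V'_def)
    then have "V' \<subset> V" using u(1) unfolding V'_def by blast
    moreover have "span V' = V'" "span V = V"
      using V V' by simp_all
    ultimately have "dim V' < dim V"
      using dim_psubset[of V' V] by metis
    then obtain B' where B': "B' \<subseteq> V'" "finite B'" "pairwise orthogonal B'"
      "\<forall>b\<in>B'. norm b = 1 \<and> (\<exists>c. A *v b = c *\<^sub>R b)" "V' \<subseteq> span B'"
      using less.hyps[OF _ V' inv'] by blast
    show ?thesis
    proof (intro exI[of _ "insert u B'"] conjI)
      show "insert u B' \<subseteq> V" using B'(1) u by (auto simp: V'_def)
      show "finite (insert u B')" using B'(2) by simp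
      show "pairwise orthogonal (insert u B')"
        using B'(1,3) by (auto simp: pairwise_insert V'_def orthogonal_def inner_commute)
      show "\<forall>b\<in>insert u B'. norm b = 1 \<and> (\<exists>c. A *v b = c *\<^sub>R b)"
        using B'(4) u eig by auto
      show "V \<subseteq> span (insert u B')"
      proof
        fix x
        assume x: "x \<in> V"
        have "x - inner u x *\<^sub>R u \<in> V'"
          using x u uu V by (simp add: V'_def subspace_diff subspace_scale inner_diff_right)
        then have "x - inner u x *\<^sub>R u \<in> span (insert u B')"
          using B'(5) span_mono[of B' "insert u B'"] by auto
        moreover have "u \<in> span (insert u B')"
          by (simp add: span_base)
        ultimately have "x - inner u x *\<^sub>R u + inner u x *\<^sub>R u \<in> span (insert u B')"
          by (intro span_add span_scale)
        then show "x \<in> span (insert u B')" by simp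
      qed
    qed
  qed
qed

theorem symmetric_matrix_diagonalization:
  fixes A :: "real^'n^'n"
  assumes A: "transpose A = A"
  obtains Q lam where "orthogonal_matrix Q" and "A = Q ** diag_mat lam ** transpose Q"
proof -
  obtain B where B: "finite B" "pairwise orthogonal B"
      "\<forall>b\<in>B. norm b = 1 \<and> (\<exists>c. A *v b = c *\<^sub>R b)" "UNIV \<subseteq> span B"
    using invariant_subspace_orthonormal_eigenbasis[OF A, of UNIV] by auto
  have "independent B"
    using pairwise_orthogonal_independent[OF B(2)] B(3) by force
  moreover have "span B = UNIV"
    using B(4) by (simp add: top.extremum_unique)
  ultimately have "card B = CARD('n)"
    using dim_span_eq_card_independent[of B] by simp
  then obtain g where g: "bij_betw g (UNIV::'n set) B"
    using finite_same_card_bij[of "UNIV::'n set" B] B(1) by auto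
  obtain c where c: "\<forall>b\<in>B. A *v b = c b *\<^sub>R b" using B(3) by metis
  define Q :: "real^'n^'n" where "Q = (\<chi> r i. g i $ r)"
  define lam :: "real^'n" where "lam = (\<chi> i. c (g i))"
  have gB: "g i \<in> B" for i using g by (auto simp: bij_betw_def)
  have "inner (g i) (g j) = (if i = j then 1 else 0)" for i j
  proof (cases "i = j")
    case True
    then show ?thesis using B(3) gB[of i] by (simp add: dot_square_norm)
  next
    case False
    then have "g i \<noteq> g j" using g by (auto simp: bij_betw_def inj_on_def)
    then show ?thesis using B(2) gB False by (auto simp: pairwise_def orthogonal_def)
  qed
  then have "transpose Q ** Q = mat 1"
    by (simp add: Q_def transpose_def matrix_matrix_mult_def mat_def vec_eq_iff inner_vec_def)
  then have Q: "orthogonal_matrix Q" by (simp add: orthogonal_matrix)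
  have "(A ** Q)$r$i = (Q ** diag_mat lam)$r$i" for r i
  proof -
    have "(A ** Q)$r$i = (A *v g i)$r"
      by (simp add: Q_def matrix_matrix_mult_def matrix_vector_mult_def)
    also have "\<dots> = c (g i) * g i $ r" using c gB by simp
    also have "\<dots> = (Q ** diag_mat lam)$r$i"
      by (simp add: Q_def lam_def diag_mat_def matrix_matrix_mult_def if_distrib if_distribR
          sum.delta cong: if_cong)
    finally show ?thesis .
  qed
  then have AQ: "A ** Q = Q ** diag_mat lam"
    by (simp add: vec_eq_iff)
  have "A = A ** Q ** transpose Q"
    using Q by (simp add: orthogonal_matrix_def flip: matrix_mul_assoc)
  also have "\<dots> = Q ** diag_mat lam ** transpose Q"
    by (simp add: AQ)
  finally show ?thesis using Q that by blast
qed

section \<open>Spectral calculus and the f-mean\<close>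

lemma diag_mat_mult_vec: "(diag_mat d *v w)$i = d$i * w$i"
  by (simp add: diag_mat_def matrix_vector_mult_def if_distrib if_distribR sum.delta cong: if_cong)

(* mat_fun does not depend on the chosen diagonalization: every candidate acts as
   multiplication by g c on the eigenvectors for the eigenvalue c. *)
lemma spectral_fun_eigenvector:
  fixes Q :: "real^'n^'n"
  assumes Q: "orthogonal_matrix Q" and v: "(Q ** diag_mat lam ** transpose Q) *v v = c *\<^sub>R v"
  shows "(Q ** diag_mat (\<chi> i. g (lam$i)) ** transpose Q) *v v = g c *\<^sub>R v"
proof -
  have QtQ: "transpose Q ** Q = mat 1" and QQt: "Q ** transpose Q = mat 1"
    using Q by (auto simp: orthogonal_matrix_def)
  define w where "w = transpose Q *v v"
  have "diag_mat lam *v w = transpose Q *v ((Q ** diag_mat lam ** transpose Q) *v v)"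
    by (simp add: w_def matrix_vector_mul_assoc matrix_mul_assoc QtQ del: transpose_matrix_vector)
  also have "\<dots> = c *\<^sub>R w"
    by (simp add: v w_def matrix_vector_mult_scaleR del: transpose_matrix_vector)
  finally have "lam$i * w$i = c * w$i" for i
    using diag_mat_mult_vec[of lam w i] by (metis vector_scaleR_component real_scaleR_def)
  then have "g (lam$i) * w$i = g c * w$i" for i
    by (metis mult_cancel_right)
  then have "diag_mat (\<chi> i. g (lam$i)) *v w = g c *\<^sub>R w"
    by (simp add: vec_eq_iff diag_mat_mult_vec)
  then have "Q *v (diag_mat (\<chi> i. g (lam$i)) *v w) = g c *\<^sub>R v"
    by (simp add: w_def matrix_vector_mult_scaleR matrix_vector_mul_assoc QQt
        del: transpose_matrix_vector)
  then show ?thesis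
    by (simp add: w_def matrix_vector_mul_assoc matrix_mul_assoc del: transpose_matrix_vector)
qed

lemma spectral_fun_unique:
  fixes Q Q' :: "real^'n^'n"
  assumes Q: "orthogonal_matrix Q" and Q': "orthogonal_matrix Q'"
    and X: "Q ** diag_mat lam ** transpose Q = Q' ** diag_mat lam' ** transpose Q'"
  shows "Q ** diag_mat (\<chi> i. g (lam$i)) ** transpose Q = Q' ** diag_mat (\<chi> i. g (lam'$i)) ** transpose Q'"
    (is "?Y = ?Y'")
proof -
  have QtQ': "transpose Q' ** Q' = mat 1" and QQt': "Q' ** transpose Q' = mat 1"
    using Q' by (auto simp: orthogonal_matrix_def)
  have "?Y *v (Q' *v axis i 1) = ?Y' *v (Q' *v axis i 1)" for i
  proof -
    have "diag_mat lam' *v axis i 1 = lam'$i *\<^sub>R axis i 1"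
      by (simp add: vec_eq_iff diag_mat_mult_vec axis_def)
    then have "(Q' ** diag_mat lam' ** transpose Q') *v (Q' *v axis i 1) = lam'$i *\<^sub>R (Q' *v axis i 1)"
      by (simp add: matrix_vector_mul_assoc matrix_vector_mult_scaleR QtQ'
          flip: matrix_mul_assoc[of "Q' ** diag_mat lam'"] matrix_vector_mul_assoc[of Q'])
    then show ?thesis
      using spectral_fun_eigenvector[OF Q] spectral_fun_eigenvector[OF Q'] X by metis
  qed
  then have "(?Y ** Q') *v axis i 1 = (?Y' ** Q') *v axis i 1" for i
    by (simp only: matrix_vector_mul_assoc)
  then have "?Y ** Q' = ?Y' ** Q'"
    by (auto simp: matrix_vector_mult_basis vec_eq_iff column_def)
  then have "?Y ** Q' ** transpose Q' = ?Y' ** Q' ** transpose Q'" by simp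
  then show ?thesis by (simp add: QQt' flip: matrix_mul_assoc)
qed

lemma mat_fun_diag:
  fixes Q :: "real^'n^'n"
  assumes Q: "orthogonal_matrix Q"
  shows "mat_fun g (Q ** diag_mat lam ** transpose Q) = Q ** diag_mat (\<chi> i. g (lam$i)) ** transpose Q"
proof -
  define P where "P Y \<longleftrightarrow> (\<exists>Q' lam'. orthogonal_matrix Q' \<and>
       Q ** diag_mat lam ** transpose Q = Q' ** diag_mat lam' ** transpose Q' \<and>
       Y = Q' ** diag_mat (\<chi> i. g (lam'$i)) ** transpose Q')" for Y
  have "P (Q ** diag_mat (\<chi> i. g (lam$i)) ** transpose Q)"
    unfolding P_def using Q by blast
  moreover have "Y = Q ** diag_mat (\<chi> i. g (lam$i)) ** transpose Q" if "P Y" for Y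
    using that spectral_fun_unique[OF Q] unfolding P_def by metis
  ultimately show ?thesis
    unfolding mat_fun_def P_def[symmetric] by (rule someI2)
qed

lemma mat_fun_orthogonal_conj:
  fixes S M :: "real^'n^'n"
  assumes S: "orthogonal_matrix S" and M: "transpose M = M"
  shows "mat_fun g (S ** M ** transpose S) = S ** mat_fun g M ** transpose S"
proof -
  obtain Q lam where Q: "orthogonal_matrix Q" and M: "M = Q ** diag_mat lam ** transpose Q"
    using symmetric_matrix_diagonalization[OF M] by blast
  have "S ** M ** transpose S = (S ** Q) ** diag_mat lam ** transpose (S ** Q)"
    by (simp add: M matrix_transpose_mul matrix_mul_assoc)
  then show ?thesis
    using mat_fun_diag[OF orthogonal_matrix_mul[OF S Q]] mat_fun_diag[OF Q]
    by (simp add: M matrix_transpose_mul matrix_mul_assoc)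
qed

lemma trace_orthogonal_conj:
  fixes S :: "real^'n^'n"
  assumes "orthogonal_matrix S"
  shows "trace (S ** Y ** transpose S) = trace Y"
proof -
  have "trace (S ** Y ** transpose S) = trace (transpose S ** (S ** Y))"
    by (rule trace_mul_sym)
  also have "\<dots> = trace Y"
    using assms by (simp add: matrix_mul_assoc orthogonal_matrix_def)
  finally show ?thesis .
qed

theorem lemma1:
  fixes \<rho> :: "complex^'d^'d"
    and Z :: "'n::finite \<Rightarrow> complex^'d^'d"
    and S :: "real^'n^'n"
    and \<theta> :: "real^'n"
    and f :: "real \<Rightarrow> real"
    and I :: "real set"
  assumes "density_operator \<rho>"
    and "\<forall>j. hermitian (Z j)"
    and "\<forall>j k. Z j ** Z k = Z k ** Z j"
    and "orthogonal_matrix S"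
    and "is_interval I"
    and "real_spectrum (qfi_matrix (unitary_family Z \<rho>) \<theta>) \<subseteq> I"
    and "continuous_on I f"
    and "monotone_on I (<) (<) f \<or> monotone_on I (<) (>) f"
  shows "f_mean I f (qfi_matrix (unitary_family (\<lambda>j. \<Sum>k\<in>UNIV. S$j$k *\<^sub>R Z k) \<rho>) \<theta>)
       = f_mean I f (qfi_matrix (unitary_family Z \<rho>) \<theta>)"
proof -
  let ?F = "qfi_matrix (unitary_family Z \<rho>) \<theta>"
  let ?F' = "qfi_matrix (unitary_family (\<lambda>j. \<Sum>k\<in>UNIV. S$j$k *\<^sub>R Z k) \<rho>) \<theta>"
  have "?F' = S ** ?F ** transpose S"
    using qfi_matrix_mix[OF assms(1-3)] by (simp add: mix_def)
  moreover have "transpose ?F = ?F"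
    by (rule qfi_matrix_symmetric[OF assms(1-3)])
  ultimately have "trace (mat_fun f ?F') = trace (mat_fun f ?F)"
    by (simp add: mat_fun_orthogonal_conj trace_orthogonal_conj assms(4))
  then show ?thesis
    by (simp add: f_mean_def)
qed

end
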